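(* Let $X$ be a directed graph, and let $X^0$ be the directed graph obtained from $X$ by adding an extra vertex $z$ and an edge from every vertex of $X^0$ to $z$. If $X$ is strongly $\delta$-hyperbolic then $X^0$ is strongly $\max(1,\delta)$-hyperbolic. Conversely, if $X^0$ is strongly $\delta$-hyperbolic then $X$ is strongly $\delta$-hyperbolic.
   Context: Directed graphs may have loops and multiple edges; $d(u,v)$ is the length of a shortest directed path from $u$ to $v$ ($\infty$ if none). Out-ball $\overrightarrow{\mathcal{B}}_r(x)=\{y : d(x,y)\le r\}$, in-ball $\overleftarrow{\mathcal{B}}_r(x)=\{y : d(y,x)\le r\}$, extended to sets by union. A path $[x_0,\dots,x_n]$ is a geodesic if $n=d(x_0,x_n)$. A directed geodesic triangle is an ordered triple $(p,q,r)$ of geodesics with the end of $p$ equal to the start of $q$ and $p\circ q$ having the same start and end as $r$; it is $\delta$-thin if every vertex of $r$ lies in $\overrightarrow{\mathcal{B}}_\delta(p)\cup\overleftarrow{\mathcal{B}}_\delta(q)$, every vertex of $p$ lies in $\overrightarrow{\mathcal{B}}_\delta(r)\cup\overleftarrow{\mathcal{B}}_\delta(q)$, and every vertex of $q$ lies in $\overrightarrow{\mathcal{B}}_\delta(p)\cup\overleftarrow{\mathcal{B}}_\delta(r)$. A directed graph is strongly $\delta$-hyperbolic if all its directed geodesic triangles are $\delta$-thin. *)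

theory Defs
  imports Main "HOL-Library.Extended_Nat"
begin

text \<open>A directed graph (loops allowed) is given by its vertex type and an adjacency
  relation E; E u v means there is at least one edge from u to v. Multiplicity of
  edges does not affect paths (as vertex sequences), distances or geodesics.\<close>

definition is_path :: "('a \<Rightarrow> 'a \<Rightarrow> bool) \<Rightarrow> 'a list \<Rightarrow> bool" where
  "is_path E xs \<longleftrightarrow> xs \<noteq> [] \<and> (\<forall>i. Suc i < length xs \<longrightarrow> E (xs ! i) (xs ! Suc i))"

definition dist :: "('a \<Rightarrow> 'a \<Rightarrow> bool) \<Rightarrow> 'a \<Rightarrow> 'a \<Rightarrow> enat" where
  "dist E u v = (INF xs \<in> {xs. is_path E xs \<and> hd xs = u \<and> last xs = v}. enat (length xs - 1))"

definition geodesic :: "('a \<Rightarrow> 'a \<Rightarrow> bool) \<Rightarrow> 'a list \<Rightarrow> bool" where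
  "geodesic E xs \<longleftrightarrow> is_path E xs \<and> enat (length xs - 1) = dist E (hd xs) (last xs)"

definition out_ball :: "('a \<Rightarrow> 'a \<Rightarrow> bool) \<Rightarrow> real \<Rightarrow> 'a set \<Rightarrow> 'a set" where
  "out_ball E r A = {y. \<exists>x\<in>A. \<exists>n. dist E x y = enat n \<and> real n \<le> r}"

definition in_ball :: "('a \<Rightarrow> 'a \<Rightarrow> bool) \<Rightarrow> real \<Rightarrow> 'a set \<Rightarrow> 'a set" where
  "in_ball E r A = {y. \<exists>x\<in>A. \<exists>n. dist E y x = enat n \<and> real n \<le> r}"

definition geodesic_triangle :: "('a \<Rightarrow> 'a \<Rightarrow> bool) \<Rightarrow> 'a list \<Rightarrow> 'a list \<Rightarrow> 'a list \<Rightarrow> bool" where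
  "geodesic_triangle E p q r \<longleftrightarrow> geodesic E p \<and> geodesic E q \<and> geodesic E r \<and>
     last p = hd q \<and> hd r = hd p \<and> last r = last q"

definition thin_triangle :: "('a \<Rightarrow> 'a \<Rightarrow> bool) \<Rightarrow> real \<Rightarrow> 'a list \<Rightarrow> 'a list \<Rightarrow> 'a list \<Rightarrow> bool" where
  "thin_triangle E \<delta> p q r \<longleftrightarrow>
     (\<forall>v\<in>set r. v \<in> out_ball E \<delta> (set p) \<union> in_ball E \<delta> (set q)) \<and>
     (\<forall>v\<in>set p. v \<in> out_ball E \<delta> (set r) \<union> in_ball E \<delta> (set q)) \<and>
     (\<forall>v\<in>set q. v \<in> out_ball E \<delta> (set p) \<union> in_ball E \<delta> (set r))"

definition strongly_hyperbolic :: "('a \<Rightarrow> 'a \<Rightarrow> bool) \<Rightarrow> real \<Rightarrow> bool" where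
  "strongly_hyperbolic E \<delta> \<longleftrightarrow>
     (\<forall>p q r. geodesic_triangle E p q r \<longrightarrow> thin_triangle E \<delta> p q r)"

text \<open>X^0: vertices 'a option, the new vertex z is None; an edge from every vertex
  (including z itself) to z.\<close>
fun cone_edge :: "('a \<Rightarrow> 'a \<Rightarrow> bool) \<Rightarrow> 'a option \<Rightarrow> 'a option \<Rightarrow> bool" where
  "cone_edge E (Some u) (Some v) = E u v"
| "cone_edge E _ None = True"
| "cone_edge E None (Some v) = False"

end

theory Submission
  imports Defs
begin

text \<open>No edge leaves the apex z of the cone except its loop, so a path that reaches z stays
  there. Hence a geodesic triangle of the cone either avoids z entirely, and is then a geodesic
  triangle of X because distances between vertices of X do not change, or its side q and its
  side r both end in z, and then every vertex lies within distance 1 of z.\<close>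

lemma is_path_nonempty: "is_path E xs \<Longrightarrow> xs \<noteq> []"
  unfolding is_path_def by blast

lemma cone_path_stays_at_apex:
  assumes path: "is_path (cone_edge E) xs" and "xs ! i = None" "i \<le> j" "j < length xs"
  shows "xs ! j = None"
  using assms(3,4)
proof (induction j rule: dec_induct)
  case base
  then show ?case using assms(2) by simp
next
  case (step j)
  then have "cone_edge E (xs ! j) (xs ! Suc j)" using path unfolding is_path_def by blast
  with step show ?case by (cases "xs ! Suc j") auto
qed

lemma cone_path_last_apex:
  assumes path: "is_path (cone_edge E) xs" and "None \<in> set xs"
  shows "last xs = None"
proof -
  obtain i where "i < length xs" "xs ! i = None"
    using assms(2) by (metis in_set_conv_nth)
  then have "xs ! (length xs - 1) = None"
    using cone_path_stays_at_apex[OF path] by simp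
  then show ?thesis using is_path_nonempty[OF path] by (simp add: last_conv_nth)
qed

lemma map_the_Some: "None \<notin> set xs \<Longrightarrow> map Some (map the xs) = xs"
  by (induction xs) auto

lemma is_path_cone_map_Some [simp]: "is_path (cone_edge E) (map Some ys) \<longleftrightarrow> is_path E ys"
  unfolding is_path_def by auto

lemma cone_paths_between_Some:
  "{xs. is_path (cone_edge E) xs \<and> hd xs = Some u \<and> last xs = Some v}
   = map Some ` {ys. is_path E ys \<and> hd ys = u \<and> last ys = v}"
proof (intro equalityI subsetI)
  fix xs assume "xs \<in> {xs. is_path (cone_edge E) xs \<and> hd xs = Some u \<and> last xs = Some v}"
  then have xs: "is_path (cone_edge E) xs" "hd xs = Some u" "last xs = Some v" by auto
  have "None \<notin> set xs" using cone_path_last_apex[OF xs(1)] xs(3) by auto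
  then have eq: "xs = map Some (map the xs)" by (metis map_the_Some)
  have "xs \<noteq> []" using is_path_nonempty[OF xs(1)] .
  then have "is_path E (map the xs) \<and> hd (map the xs) = u \<and> last (map the xs) = v"
    using xs eq by (metis is_path_cone_map_Some hd_map last_map option.sel)
  with eq show "xs \<in> map Some ` {ys. is_path E ys \<and> hd ys = u \<and> last ys = v}" by blast
next
  fix xs assume "xs \<in> map Some ` {ys. is_path E ys \<and> hd ys = u \<and> last ys = v}"
  then obtain ys where ys: "xs = map Some ys" "is_path E ys" "hd ys = u" "last ys = v" by auto
  then show "xs \<in> {xs. is_path (cone_edge E) xs \<and> hd xs = Some u \<and> last xs = Some v}"
    using is_path_nonempty[OF ys(2)] by (simp add: hd_map last_map)
qed

lemma dist_cone_Some [simp]: "dist (cone_edge E) (Some u) (Some v) = dist E u v"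
  unfolding dist_def cone_paths_between_Some by (simp add: image_comp)

lemma dist_cone_apex_le_1: "\<exists>n. dist (cone_edge E) x None = enat n \<and> n \<le> 1"
proof -
  have "[x, None] \<in> {xs. is_path (cone_edge E) xs \<and> hd xs = x \<and> last xs = None}"
    by (auto simp: is_path_def less_Suc_eq)
  then have "dist (cone_edge E) x None \<le> enat (length [x, None] - 1)"
    unfolding dist_def by (rule INF_lower)
  then have "dist (cone_edge E) x None \<le> enat 1" by simp
  then show ?thesis by (metis enat_ile enat_ord_simps(1))
qed

lemma in_ball_cone_apex:
  assumes "None \<in> A" "1 \<le> r"
  shows "x \<in> in_ball (cone_edge E) r A"
proof -
  obtain n where "dist (cone_edge E) x None = enat n" "n \<le> 1"
    using dist_cone_apex_le_1 by blast
  with assms show ?thesis unfolding in_ball_def by force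
qed

lemma out_ball_cone_Some:
  "Some y \<in> out_ball (cone_edge E) r (Some ` A) \<longleftrightarrow> y \<in> out_ball E r A"
  unfolding out_ball_def by auto

lemma in_ball_cone_Some:
  "Some y \<in> in_ball (cone_edge E) r (Some ` A) \<longleftrightarrow> y \<in> in_ball E r A"
  unfolding in_ball_def by auto

lemma geodesic_cone_map_Some: "geodesic (cone_edge E) (map Some ys) \<longleftrightarrow> geodesic E ys"
  by (cases "ys = []") (simp_all add: geodesic_def is_path_def hd_map last_map)

lemma geodesic_nonempty: "geodesic E xs \<Longrightarrow> xs \<noteq> []"
  unfolding geodesic_def by (blast dest: is_path_nonempty)

lemma geodesic_triangle_cone_map_Some:
  "geodesic_triangle (cone_edge E) (map Some p) (map Some q) (map Some r)
   \<longleftrightarrow> geodesic_triangle E p q r"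
proof (cases "geodesic E p \<and> geodesic E q \<and> geodesic E r")
  case True
  then have "p \<noteq> []" "q \<noteq> []" "r \<noteq> []" by (auto dest: geodesic_nonempty)
  with True show ?thesis
    unfolding geodesic_triangle_def geodesic_cone_map_Some by (simp add: hd_map last_map)
next
  case False
  then show ?thesis unfolding geodesic_triangle_def geodesic_cone_map_Some by blast
qed

lemma thin_triangle_cone_map_Some:
  "thin_triangle (cone_edge E) \<delta> (map Some p) (map Some q) (map Some r)
   \<longleftrightarrow> thin_triangle E \<delta> p q r"
  unfolding thin_triangle_def by (simp add: out_ball_cone_Some in_ball_cone_Some)

lemma thin_triangle_mono:
  assumes "thin_triangle E \<delta> p q r" "\<delta> \<le> \<delta>'"
  shows "thin_triangle E \<delta>' p q r"
proof -
  have "out_ball E \<delta> A \<subseteq> out_ball E \<delta>' A" "in_ball E \<delta> A \<subseteq> in_ball E \<delta>' A" for A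
    using assms(2) unfolding out_ball_def in_ball_def by force+
  with assms(1) show ?thesis unfolding thin_triangle_def by blast
qed

lemma geodesic_triangle_cone_apex_thin:
  assumes "geodesic_triangle (cone_edge E) p q r" "last q = None" "1 \<le> \<delta>"
  shows "thin_triangle (cone_edge E) \<delta> p q r"
proof -
  have "None \<in> set q" "None \<in> set r"
    using assms(1,2) unfolding geodesic_triangle_def by (metis geodesic_nonempty last_in_set)+
  with assms(3) show ?thesis unfolding thin_triangle_def by (auto intro: in_ball_cone_apex)
qed

lemma geodesic_triangle_cone_avoiding_apex:
  assumes T: "geodesic_triangle (cone_edge E) p q r" and "last q \<noteq> None"
  obtains p' q' r' where "p = map Some p'" "q = map Some q'" "r = map Some r'"
proof -
  have path: "is_path (cone_edge E) p" "is_path (cone_edge E) q" "is_path (cone_edge E) r"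
    and link: "last p = hd q" "last r = last q" and "q \<noteq> []"
    using T unfolding geodesic_triangle_def geodesic_def by (auto dest: is_path_nonempty)
  have q: "None \<notin> set q" and r: "None \<notin> set r"
    using cone_path_last_apex path(2,3) link(2) \<open>last q \<noteq> None\<close> by metis+
  then have p: "None \<notin> set p"
    using cone_path_last_apex[OF path(1)] link(1) \<open>q \<noteq> []\<close> by (metis hd_in_set)
  from map_the_Some[OF p, symmetric] map_the_Some[OF q, symmetric] map_the_Some[OF r, symmetric]
  show ?thesis by (rule that)
qed

lemma strongly_hyperbolic_cone:
  assumes hyp: "strongly_hyperbolic E \<delta>"
  shows "strongly_hyperbolic (cone_edge E) (max 1 \<delta>)"
  unfolding strongly_hyperbolic_def
proof (intro allI impI)
  fix p q r assume T: "geodesic_triangle (cone_edge E) p q r"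
  show "thin_triangle (cone_edge E) (max 1 \<delta>) p q r"
  proof (cases "last q = None")
    case True
    with T show ?thesis by (simp add: geodesic_triangle_cone_apex_thin)
  next
    case False
    with T obtain p' q' r' where eqs: "p = map Some p'" "q = map Some q'" "r = map Some r'"
      by (rule geodesic_triangle_cone_avoiding_apex)
    with T have "geodesic_triangle E p' q' r'" by (simp add: geodesic_triangle_cone_map_Some)
    with hyp have "thin_triangle E \<delta> p' q' r'" unfolding strongly_hyperbolic_def by blast
    then have "thin_triangle E (max 1 \<delta>) p' q' r'" by (rule thin_triangle_mono) simp
    with eqs show ?thesis by (simp add: thin_triangle_cone_map_Some)
  qed
qed

lemma strongly_hyperbolic_of_cone:
  assumes hyp: "strongly_hyperbolic (cone_edge E) \<delta>"
  shows "strongly_hyperbolic E \<delta>"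
  unfolding strongly_hyperbolic_def
proof (intro allI impI)
  fix p q r assume "geodesic_triangle E p q r"
  then have "geodesic_triangle (cone_edge E) (map Some p) (map Some q) (map Some r)"
    by (simp add: geodesic_triangle_cone_map_Some)
  with hyp have "thin_triangle (cone_edge E) \<delta> (map Some p) (map Some q) (map Some r)"
    unfolding strongly_hyperbolic_def by blast
  then show "thin_triangle E \<delta> p q r" by (simp add: thin_triangle_cone_map_Some)
qed

theorem proposition2p6:
  fixes E :: "'a \<Rightarrow> 'a \<Rightarrow> bool" and \<delta> :: real
  shows "(strongly_hyperbolic E \<delta> \<longrightarrow> strongly_hyperbolic (cone_edge E) (max 1 \<delta>))
       \<and> (strongly_hyperbolic (cone_edge E) \<delta> \<longrightarrow> strongly_hyperbolic E \<delta>)"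
  using strongly_hyperbolic_cone strongly_hyperbolic_of_cone by blast

end
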